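(* The sequence $(v_n)_{n\ge0}$ is pointwise nonincreasing, so $v_\infty(\phi):=\lim_{n\to\infty}v_n(\phi)$ exists for every $\phi\ge0$. Each function $v_n$, $0\le n\le\infty$, is concave, nondecreasing, and satisfies $-1/c\le v_n\le0$ on $\mathbb R_+$.
   Context: Fix constants $\lambda,\lambda_0,\lambda_1\in(0,\infty)$, $\mu\in\mathbb R\setminus\{0\}$, $c>0$. Let $(E,\mathcal E)$ be a measurable space with probability measures $\nu_0,\nu_1$, $\nu_1\ll\nu_0$, $f:=d\nu_1/d\nu_0$. On $(\Omega,\mathcal F,\mathbb P_0)$ let $X$ be a standard Wiener process and, independent of it, $(T_n,Z_n)_{n\ge1}$ a marked point process whose arrivals form a Poisson process of rate $\lambda_0$ and whose marks are i.i.d. $\nu_0$, independent of the arrivals. $\mathbb F^X$ is the filtration generated by $X$. Let $L_t=\exp\{\mu X_t-(\mu^2/2+\lambda_1-\lambda_0)t\}\prod_{n:\,T_n\le t}\frac{\lambda_1}{\lambda_0}f(Z_n)$; for $\phi\ge0$, $\Phi_t=\phi e^{\lambda t}L_t+\int_0^t\lambda e^{\lambda(t-s)}\frac{L_t}{L_s}ds$, with $\mathbb E_0^\phi$ the expectation when $\Phi_0=\phi$. Let $g(\phi)=\phi-\lambda/c$. For bounded Borel $w$, $(Jw)(\phi)=\inf_{\tau}\mathbb E_0^\phi\big[\int_0^{\tau\wedge T_1}e^{-\lambda t}g(\Phi_t)dt+\mathbf 1_{\{\tau\ge T_1\}}e^{-\lambda T_1}w(\Phi_{T_1})\big]$, infimum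 over $\mathbb F^X$-stopping times $\tau$. Define $v_0\equiv0$ and $v_{n+1}=Jv_n$ for $n\ge0$. *)

theory Defs
  imports "HOL-Probability.Probability"
begin

definition wiener_process :: "'a measure \<Rightarrow> (real \<Rightarrow> 'a \<Rightarrow> real) \<Rightarrow> bool" where
  "wiener_process M X \<longleftrightarrow>
     (\<forall>t. X t \<in> borel_measurable M) \<and>
     (AE \<omega> in M. X 0 \<omega> = 0) \<and>
     (AE \<omega> in M. continuous_on {0..} (\<lambda>t. X t \<omega>)) \<and>
     (\<forall>s t. 0 \<le> s \<and> s < t \<longrightarrow>
        distributed M lborel (\<lambda>\<omega>. X t \<omega> - X s \<omega>) (normal_density 0 (sqrt (t - s)))) \<and>
     (\<forall>ts :: nat \<Rightarrow> real. \<forall>k. 0 \<le> ts 0 \<and> strict_mono ts \<longrightarrow>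
        prob_space.indep_vars M (\<lambda>_. borel) (\<lambda>i \<omega>. X (ts (Suc i)) \<omega> - X (ts i) \<omega>) {..<k})"

text \<open>Arrival times T 1 < T 2 < ... (index 0 unused) of a Poisson process of rate l:
  the interarrival times T 1, T 2 - T 1, T 3 - T 2, ... are i.i.d. exponential(l).\<close>
definition interarrival :: "(nat \<Rightarrow> 'a \<Rightarrow> real) \<Rightarrow> nat \<Rightarrow> 'a \<Rightarrow> real" where
  "interarrival T n \<omega> = T (Suc n) \<omega> - (if n = 0 then 0 else T n \<omega>)"

definition poisson_arrivals :: "'a measure \<Rightarrow> real \<Rightarrow> (nat \<Rightarrow> 'a \<Rightarrow> real) \<Rightarrow> bool" where
  "poisson_arrivals M l T \<longleftrightarrow>
     (\<forall>n. T (Suc n) \<in> borel_measurable M) \<and>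
     prob_space.indep_vars M (\<lambda>_. borel) (interarrival T) UNIV \<and>
     (\<forall>n. distributed M lborel (interarrival T n) (exponential_density l))"

text \<open>Marks Z 1, Z 2, ... (index 0 unused): i.i.d. with law nu.\<close>
definition iid_marks :: "'a measure \<Rightarrow> 'e measure \<Rightarrow> (nat \<Rightarrow> 'a \<Rightarrow> 'e) \<Rightarrow> bool" where
  "iid_marks M nu Z \<longleftrightarrow>
     (\<forall>n. Z (Suc n) \<in> measurable M nu) \<and>
     prob_space.indep_vars M (\<lambda>_. nu) (\<lambda>n. Z (Suc n)) UNIV \<and>
     (\<forall>n. distr M nu (Z (Suc n)) = nu)"

definition indep_rv_pair :: "'a measure \<Rightarrow> 'b measure \<Rightarrow> ('a \<Rightarrow> 'b) \<Rightarrow> 'c measure \<Rightarrow> ('a \<Rightarrow> 'c) \<Rightarrow> bool" where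
  "indep_rv_pair M Ma A Mb B \<longleftrightarrow>
     A \<in> measurable M Ma \<and> B \<in> measurable M Mb \<and>
     prob_space.indep_set M {A -` S \<inter> space M | S. S \<in> sets Ma} {B -` S \<inter> space M | S. S \<in> sets Mb}"

text \<open>Natural filtration of X, indexed by [0, \<infinity>] (so that stopping times may be infinite):
  F t = sigma(X s : 0 <= s <= t).\<close>
definition natfilt :: "'a measure \<Rightarrow> (real \<Rightarrow> 'a \<Rightarrow> real) \<Rightarrow> ennreal \<Rightarrow> 'a measure" where
  "natfilt M X t = sigma (space M)
     (\<Union>s\<in>{s. 0 \<le> s \<and> ennreal s \<le> t}. {X s -` B \<inter> space M | B. B \<in> sets borel})"

definition eexp :: "'a measure \<Rightarrow> ('a \<Rightarrow> real) \<Rightarrow> ereal" where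
  "eexp M Y = enn2ereal (\<integral>\<^sup>+\<omega>. ennreal (Y \<omega>) \<partial>M) - enn2ereal (\<integral>\<^sup>+\<omega>. ennreal (- Y \<omega>) \<partial>M)"

definition Lproc :: "real \<Rightarrow> real \<Rightarrow> real \<Rightarrow> ('e \<Rightarrow> real) \<Rightarrow> (real \<Rightarrow> 'a \<Rightarrow> real)
    \<Rightarrow> (nat \<Rightarrow> 'a \<Rightarrow> real) \<Rightarrow> (nat \<Rightarrow> 'a \<Rightarrow> 'e) \<Rightarrow> real \<Rightarrow> 'a \<Rightarrow> real" where
  "Lproc mu lam0 lam1 f X T Z t \<omega> =
     exp (mu * X t \<omega> - (mu\<^sup>2 / 2 + lam1 - lam0) * t) *
     (\<Prod>n\<in>{n. 1 \<le> n \<and> T n \<omega> \<le> t}. lam1 / lam0 * f (Z n \<omega>))"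

text \<open>The ratio L t / L s (0 <= s <= t), written out explicitly.\<close>
definition Lratio :: "real \<Rightarrow> real \<Rightarrow> real \<Rightarrow> ('e \<Rightarrow> real) \<Rightarrow> (real \<Rightarrow> 'a \<Rightarrow> real)
    \<Rightarrow> (nat \<Rightarrow> 'a \<Rightarrow> real) \<Rightarrow> (nat \<Rightarrow> 'a \<Rightarrow> 'e) \<Rightarrow> real \<Rightarrow> real \<Rightarrow> 'a \<Rightarrow> real" where
  "Lratio mu lam0 lam1 f X T Z s t \<omega> =
     exp (mu * (X t \<omega> - X s \<omega>) - (mu\<^sup>2 / 2 + lam1 - lam0) * (t - s)) *
     (\<Prod>n\<in>{n. 1 \<le> n \<and> s < T n \<omega> \<and> T n \<omega> \<le> t}. lam1 / lam0 * f (Z n \<omega>))"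

definition Phi :: "real \<Rightarrow> real \<Rightarrow> real \<Rightarrow> real \<Rightarrow> ('e \<Rightarrow> real) \<Rightarrow> (real \<Rightarrow> 'a \<Rightarrow> real)
    \<Rightarrow> (nat \<Rightarrow> 'a \<Rightarrow> real) \<Rightarrow> (nat \<Rightarrow> 'a \<Rightarrow> 'e) \<Rightarrow> real \<Rightarrow> real \<Rightarrow> 'a \<Rightarrow> real" where
  "Phi lam mu lam0 lam1 f X T Z phi t \<omega> =
     phi * exp (lam * t) * Lproc mu lam0 lam1 f X T Z t \<omega> +
     (LINT s:{0..t}|lborel. lam * exp (lam * (t - s)) * Lratio mu lam0 lam1 f X T Z s t \<omega>)"

definition payoff :: "real \<Rightarrow> real \<Rightarrow> real \<Rightarrow> real \<Rightarrow> real \<Rightarrow> ('e \<Rightarrow> real) \<Rightarrow> (real \<Rightarrow> 'a \<Rightarrow> real)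
    \<Rightarrow> (nat \<Rightarrow> 'a \<Rightarrow> real) \<Rightarrow> (nat \<Rightarrow> 'a \<Rightarrow> 'e) \<Rightarrow> ('a \<Rightarrow> ennreal) \<Rightarrow> (real \<Rightarrow> real)
    \<Rightarrow> real \<Rightarrow> 'a \<Rightarrow> real" where
  "payoff lam mu c lam0 lam1 f X T Z \<tau> w phi \<omega> =
     (LINT t:{t. 0 \<le> t \<and> ennreal t < min (\<tau> \<omega>) (ennreal (T 1 \<omega>))}|lborel.
        exp (- lam * t) * (Phi lam mu lam0 lam1 f X T Z phi t \<omega> - lam / c)) +
     (if ennreal (T 1 \<omega>) \<le> \<tau> \<omega>
      then exp (- lam * T 1 \<omega>) * w (Phi lam mu lam0 lam1 f X T Z phi (T 1 \<omega>) \<omega>)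
      else 0)"

definition Jop :: "'a measure \<Rightarrow> real \<Rightarrow> real \<Rightarrow> real \<Rightarrow> real \<Rightarrow> real \<Rightarrow> ('e \<Rightarrow> real)
    \<Rightarrow> (real \<Rightarrow> 'a \<Rightarrow> real) \<Rightarrow> (nat \<Rightarrow> 'a \<Rightarrow> real) \<Rightarrow> (nat \<Rightarrow> 'a \<Rightarrow> 'e)
    \<Rightarrow> (real \<Rightarrow> real) \<Rightarrow> real \<Rightarrow> ereal" where
  "Jop M lam mu c lam0 lam1 f X T Z w phi =
     (INF \<tau> \<in> {\<tau>. stopping_time (natfilt M X) \<tau>}.
        eexp M (payoff lam mu c lam0 lam1 f X T Z \<tau> w phi))"

primrec vseq :: "'a measure \<Rightarrow> real \<Rightarrow> real \<Rightarrow> real \<Rightarrow> real \<Rightarrow> real \<Rightarrow> ('e \<Rightarrow> real)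
    \<Rightarrow> (real \<Rightarrow> 'a \<Rightarrow> real) \<Rightarrow> (nat \<Rightarrow> 'a \<Rightarrow> real) \<Rightarrow> (nat \<Rightarrow> 'a \<Rightarrow> 'e)
    \<Rightarrow> nat \<Rightarrow> real \<Rightarrow> ereal" where
  "vseq M lam mu c lam0 lam1 f X T Z 0 = (\<lambda>_. 0)"
| "vseq M lam mu c lam0 lam1 f X T Z (Suc n) =
     Jop M lam mu c lam0 lam1 f X T Z (\<lambda>phi. real_of_ereal (vseq M lam mu c lam0 lam1 f X T Z n phi))"

end

theory Submission
  imports Defs
begin

text \<open>
  Write \<open>v\<^sub>n\<close> for the real parts of the values of \<open>vseq\<close>.  Call a function
  \<open>w\<close> on \<open>[0,\<infinity>)\<close> of \<^emph>\<open>value shape\<close> if it is concave, nondecreasing and takes values in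
  \<open>[-1/c, 0]\<close>.  The theorem follows from four properties of the operator \<open>J\<close>:
  (1) \<open>J w \<le> 0\<close>, because stopping at once has payoff 0;
  (2) \<open>J w \<ge> -1/c\<close> whenever \<open>w \<ge> -1/c\<close>, because the running cost is at least
      \<open>-(\<lambda>/c) exp(-\<lambda> t)\<close> and the terminal reward at least \<open>-(1/c) exp(-\<lambda> T\<^sub>1)\<close>;
  (3) \<open>J\<close> is monotone in \<open>w\<close>;
  (4) \<open>J\<close> maps functions of value shape to functions of value shape.
  For (4) observe that, up to a null set, on \<open>[0, T\<^sub>1]\<close> (\<open>T\<^sub>1\<close> the first arrival) the process
  \<open>\<Phi>\<close> is affine in its starting point with nonnegative slope, so the payoff of a fixed
  stopping time has the form \<open>\<phi> A + B + I w(\<phi> R + S)\<close> with measurable \<open>A, B, I, R, S\<close>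
  and \<open>A, I, R, S \<ge> 0\<close>; its expectation is therefore concave and nondecreasing in \<open>\<phi>\<close>,
  and infima of such families keep both properties.  Induction then shows that all
  \<open>v\<^sub>n\<close> have value shape and, by (1) and (3), that \<open>v\<^sub>n\<close> decreases in \<open>n\<close>; finally pointwise
  limits of decreasing sequences of value shape functions exist and have value shape.
\<close>

lemma eexp_mono_AE:
  assumes "AE x in M. Y x \<le> Y' x"
  shows "eexp M Y \<le> eexp M Y'"
proof -
  have pos: "(\<integral>\<^sup>+x. ennreal (Y x) \<partial>M) \<le> (\<integral>\<^sup>+x. ennreal (Y' x) \<partial>M)"
    by (rule nn_integral_mono_AE) (use assms in \<open>auto intro: ennreal_leI elim!: eventually_mono\<close>)
  have neg: "(\<integral>\<^sup>+x. ennreal (- Y' x) \<partial>M) \<le> (\<integral>\<^sup>+x. ennreal (- Y x) \<partial>M)"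
    by (rule nn_integral_mono_AE) (use assms in \<open>auto intro: ennreal_leI elim!: eventually_mono\<close>)
  show ?thesis unfolding eexp_def
    by (rule ereal_minus_mono) (use pos neg in \<open>auto simp: less_eq_ennreal.rep_eq\<close>)
qed

lemma eexp_zero_AE:
  assumes "AE x in M. Y x = 0"
  shows "eexp M Y = 0"
proof -
  have "(\<integral>\<^sup>+x. ennreal (Y x) \<partial>M) = 0" "(\<integral>\<^sup>+x. ennreal (- Y x) \<partial>M) = 0"
    by (subst nn_integral_cong_AE[where v="\<lambda>_. 0"]; use assms in \<open>auto elim!: eventually_mono\<close>)+
  then show ?thesis unfolding eexp_def by simp
qed

lemma eexp_lower_bound:
  assumes M: "prob_space M" and a: "0 \<le> a" and ae: "AE x in M. - a \<le> Y x"
  shows "- ereal a \<le> eexp M Y"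
proof -
  have "(\<integral>\<^sup>+x. ennreal (- Y x) \<partial>M) \<le> (\<integral>\<^sup>+x. ennreal a \<partial>M)"
    by (rule nn_integral_mono_AE) (use ae in \<open>auto intro: ennreal_leI elim!: eventually_mono\<close>)
  also have "\<dots> = ennreal a" using M by (simp add: prob_space.emeasure_space_1)
  finally have "enn2ereal (\<integral>\<^sup>+x. ennreal (- Y x) \<partial>M) \<le> ereal a"
    by (metis a enn2ereal_ennreal less_eq_ennreal.rep_eq)
  moreover have "0 \<le> enn2ereal (\<integral>\<^sup>+x. ennreal (Y x) \<partial>M)" by simp
  ultimately show ?thesis unfolding eexp_def
    by (metis ereal_minus_mono ereal_minus(8) zero_ereal_def)
qed

lemma nn_integral_negative_part_complement:
  assumes M: "prob_space M" and Ym: "Y \<in> borel_measurable M" and ae: "AE x in M. - a \<le> Y x"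
  shows "(\<integral>\<^sup>+x. ennreal (a - max (- Y x) 0) \<partial>M) + (\<integral>\<^sup>+x. ennreal (- Y x) \<partial>M) = ennreal a"
proof -
  have "(\<integral>\<^sup>+x. ennreal (a - max (- Y x) 0) \<partial>M) + (\<integral>\<^sup>+x. ennreal (- Y x) \<partial>M)
      = (\<integral>\<^sup>+x. ennreal (a - max (- Y x) 0) + ennreal (- Y x) \<partial>M)"
    by (rule nn_integral_add[symmetric]) (use Ym in auto)
  also have "\<dots> = (\<integral>\<^sup>+x. ennreal a \<partial>M)"
    by (rule nn_integral_cong_AE)
       (use ae in \<open>auto elim!: eventually_mono simp: ennreal_plus[symmetric] max_def ennreal_neg\<close>)
  also have "\<dots> = ennreal a" using M by (simp add: prob_space.emeasure_space_1)
  finally show ?thesis .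
qed

text \<open>A random variable bounded below by \<open>-a\<close> has \<open>E[Y] = E[Y + a] - a\<close>, where
  \<open>E[Y + a]\<close> is a nonnegative integral; this turns concavity questions about \<open>eexp\<close>
  into questions about nonnegative integrals.\<close>

lemma eexp_shift:
  assumes M: "prob_space M" and a: "0 \<le> a"
    and Ym: "Y' \<in> borel_measurable M" and eq: "AE x in M. Y x = Y' x"
    and ae: "AE x in M. - a \<le> Y x"
  shows "eexp M Y = enn2ereal (\<integral>\<^sup>+x. ennreal (Y' x + a) \<partial>M) - ereal a"
proof -
  define p where "p = (\<integral>\<^sup>+x. ennreal (Y' x) \<partial>M)"
  define q where "q = (\<integral>\<^sup>+x. ennreal (- Y' x) \<partial>M)"
  define r where "r = (\<integral>\<^sup>+x. ennreal (a - max (- Y' x) 0) \<partial>M)"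
  have eexp_eq: "eexp M Y = enn2ereal p - enn2ereal q"
    unfolding eexp_def p_def q_def
    by (intro arg_cong2[where f="(-)"] arg_cong[where f=enn2ereal] nn_integral_cong_AE)
       (use eq in \<open>auto elim!: eventually_mono\<close>)
  have ae': "AE x in M. - a \<le> Y' x" using ae eq by eventually_elim auto
  have "(\<integral>\<^sup>+x. ennreal (Y' x + a) \<partial>M) = (\<integral>\<^sup>+x. ennreal (Y' x) + ennreal (a - max (- Y' x) 0) \<partial>M)"
  proof (rule nn_integral_cong_AE, use ae' in \<open>eventually_elim\<close>)
    case (elim x)
    show ?case
      using a elim by (cases "0 \<le> Y' x") (simp_all add: ennreal_plus[symmetric] ennreal_neg max_def del: ennreal_plus)
  qed
  also have "\<dots> = p + r" unfolding p_def r_def by (rule nn_integral_add) (use Ym in auto)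
  finally have shifted_eq: "(\<integral>\<^sup>+x. ennreal (Y' x + a) \<partial>M) = p + r" .
  have rq: "r + q = ennreal a"
    unfolding r_def q_def by (rule nn_integral_negative_part_complement[OF M Ym ae'])
  then have "q \<le> ennreal a" "r \<le> ennreal a" by (metis add.commute le_iff_add)+
  then have "q < \<top>" "r < \<top>" using ennreal_less_top[of a] by (blast intro: le_less_trans)+
  then obtain qr rr where qr: "q = ennreal qr" "0 \<le> qr" and rr: "r = ennreal rr" "0 \<le> rr"
    by (metis ennreal_cases less_irrefl)
  have "rr + qr = a" using rq qr rr a by (simp add: ennreal_plus[symmetric] del: ennreal_plus)
  moreover have "enn2ereal (p + r) = enn2ereal p + ereal rr" using rr by (simp add: plus_ennreal.rep_eq)
  moreover have "enn2ereal p - ereal qr = enn2ereal p + ereal rr - ereal (rr + qr)"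
    by (cases "enn2ereal p") simp_all
  ultimately show ?thesis unfolding eexp_eq shifted_eq using qr by simp
qed

lemma eexp_concave:
  assumes M: "prob_space M" and a: "0 \<le> a"
    and Yxm: "Yx' \<in> borel_measurable M" and Yym: "Yy' \<in> borel_measurable M" and Yzm: "Yz' \<in> borel_measurable M"
    and ex: "AE x in M. Yx x = Yx' x" and ey: "AE x in M. Yy x = Yy' x" and ez: "AE x in M. Yz x = Yz' x"
    and ax: "AE x in M. - a \<le> Yx x" and ay: "AE x in M. - a \<le> Yy x" and az: "AE x in M. - a \<le> Yz x"
    and u: "0 \<le> u" and v: "0 \<le> v" and uv: "u + v = 1"
    and cz: "AE x in M. u * Yx' x + v * Yy' x \<le> Yz' x"
  shows "ereal u * eexp M Yx + ereal v * eexp M Yy \<le> eexp M Yz"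
proof -
  define Hx where "Hx = (\<integral>\<^sup>+x. ennreal (Yx' x + a) \<partial>M)"
  define Hy where "Hy = (\<integral>\<^sup>+x. ennreal (Yy' x + a) \<partial>M)"
  define Hz where "Hz = (\<integral>\<^sup>+x. ennreal (Yz' x + a) \<partial>M)"
  have Ex: "eexp M Yx = enn2ereal Hx - ereal a" unfolding Hx_def by (rule eexp_shift[OF M a Yxm ex ax])
  have Ey: "eexp M Yy = enn2ereal Hy - ereal a" unfolding Hy_def by (rule eexp_shift[OF M a Yym ey ay])
  have Ez: "eexp M Yz = enn2ereal Hz - ereal a" unfolding Hz_def by (rule eexp_shift[OF M a Yzm ez az])
  have ax': "AE x in M. - a \<le> Yx' x" using ax ex by eventually_elim auto
  have ay': "AE x in M. - a \<le> Yy' x" using ay ey by eventually_elim auto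
  have "ennreal u * Hx + ennreal v * Hy
      = (\<integral>\<^sup>+x. ennreal u * ennreal (Yx' x + a) + ennreal v * ennreal (Yy' x + a) \<partial>M)"
    unfolding Hx_def Hy_def using Yxm Yym by (simp add: nn_integral_cmult nn_integral_add)
  also have "\<dots> \<le> Hz" unfolding Hz_def
  proof (rule nn_integral_mono_AE, use ax' ay' cz in eventually_elim)
    case (elim x)
    have "u * (Yx' x + a) + v * (Yy' x + a) = u * Yx' x + v * Yy' x + (u + v) * a"
      by (simp add: algebra_simps)
    then have "u * (Yx' x + a) + v * (Yy' x + a) \<le> Yz' x + a" using elim uv by simp
    then show ?case using elim u v
      by (simp add: ennreal_mult[symmetric] ennreal_plus[symmetric] ennreal_leI del: ennreal_plus)
  qed
  finally have "ereal u * enn2ereal Hx + ereal v * enn2ereal Hy \<le> enn2ereal Hz"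
    using u v by (simp add: less_eq_ennreal.rep_eq plus_ennreal.rep_eq times_ennreal.rep_eq)
  moreover have "ereal u * (enn2ereal Hx - ereal a) + ereal v * (enn2ereal Hy - ereal a)
      = ereal u * enn2ereal Hx + ereal v * enn2ereal Hy - ereal a"
  proof (cases "enn2ereal Hx"; cases "enn2ereal Hy")
    fix r s assume "enn2ereal Hx = ereal r" "enn2ereal Hy = ereal s"
    then show ?thesis using uv by (simp add: algebra_simps) (metis distrib_left mult.commute mult_1)
  qed (use u v uv in \<open>auto simp: ereal_mult_infty\<close>)
  ultimately show ?thesis unfolding Ex Ey Ez by (metis ereal_minus_mono order_refl)
qed



lemma eexp_affine_family_concave:
  assumes M: "prob_space M" and a: "0 \<le> a"
    and [measurable]: "A \<in> borel_measurable M" "B \<in> borel_measurable M" "I \<in> borel_measurable M"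
      "R \<in> borel_measurable M" "S \<in> borel_measurable M"
    and nonneg: "AE \<omega> in M. 0 \<le> I \<omega> \<and> 0 \<le> R \<omega> \<and> 0 \<le> S \<omega>"
    and wm: "mono_on {0..} w" and wc: "concave_on {0..} w"
    and rep: "\<And>\<phi>. AE \<omega> in M. P \<phi> \<omega> = \<phi> * A \<omega> + B \<omega> + I \<omega> * w (\<phi> * R \<omega> + S \<omega>)"
    and lb: "\<And>\<phi>. 0 \<le> \<phi> \<Longrightarrow> AE \<omega> in M. - a \<le> P \<phi> \<omega>"
    and x: "0 \<le> x" and y: "0 \<le> y" and u: "0 \<le> u" and v: "0 \<le> v" and uv: "u + v = 1"
  shows "ereal u * eexp M (P x) + ereal v * eexp M (P y) \<le> eexp M (P (u * x + v * y))"
proof -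
  txt \<open>A measurable version of the payoff, obtained by extending \<open>w\<close> constantly to the left.\<close>
  define w' where "w' z = w (max 0 z)" for z
  have "mono w'" unfolding w'_def mono_def by (auto intro!: mono_onD[OF wm])
  then have [measurable]: "w' \<in> borel_measurable borel" by (rule borel_measurable_mono)
  define Y where "Y \<phi> \<omega> = \<phi> * A \<omega> + B \<omega> + I \<omega> * w' (\<phi> * R \<omega> + S \<omega>)" for \<phi> \<omega>
  have Ym: "Y \<phi> \<in> borel_measurable M" for \<phi> unfolding Y_def by measurable
  have eq: "AE \<omega> in M. P \<phi> \<omega> = Y \<phi> \<omega>" if "0 \<le> \<phi>" for \<phi>
    using rep[of \<phi>] nonneg by eventually_elim (use that in \<open>simp add: Y_def w'_def\<close>)
  have z: "0 \<le> u * x + v * y" using x y u v by simp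
  show ?thesis
  proof (rule eexp_concave[OF M a Ym Ym Ym eq[OF x] eq[OF y] eq[OF z] lb[OF x] lb[OF y] lb[OF z] u v uv])
    show "AE \<omega> in M. u * Y x \<omega> + v * Y y \<omega> \<le> Y (u * x + v * y) \<omega>"
      using nonneg
    proof eventually_elim
      case (elim \<omega>)
      define p where "p = x * R \<omega> + S \<omega>"
      define q where "q = y * R \<omega> + S \<omega>"
      have pq: "0 \<le> p" "0 \<le> q" using elim x y unfolding p_def q_def by auto
      have mix: "(u * x + v * y) * R \<omega> + S \<omega> = u * p + v * q"
        using uv unfolding p_def q_def by (simp add: algebra_simps) (metis distrib_right mult_1 add.commute)
      have "u * w p + v * w q \<le> w (u * p + v * q)"
        using wc pq u v uv unfolding concave_on_iff by auto
      then have "u * w' p + v * w' q \<le> w' (u * p + v * q)"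
        unfolding w'_def using pq u v by simp
      then have "I \<omega> * (u * w' p + v * w' q) \<le> I \<omega> * w' (u * p + v * q)"
        using elim by (intro mult_left_mono) auto
      moreover have "u * Y x \<omega> + v * Y y \<omega>
          = (u * x + v * y) * A \<omega> + (u + v) * B \<omega> + I \<omega> * (u * w' p + v * w' q)"
        unfolding Y_def p_def q_def by (simp add: algebra_simps)
      ultimately show ?case using uv unfolding Y_def mix by simp
    qed
  qed
qed

lemma eexp_affine_family_mono:
  assumes nonneg: "AE \<omega> in M. 0 \<le> A \<omega> \<and> 0 \<le> I \<omega> \<and> 0 \<le> R \<omega> \<and> 0 \<le> S \<omega>"
    and wm: "mono_on {0..} w"
    and rep: "\<And>\<phi>. AE \<omega> in M. P \<phi> \<omega> = \<phi> * A \<omega> + B \<omega> + I \<omega> * w (\<phi> * R \<omega> + S \<omega>)"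
    and x: "0 \<le> x" and xy: "x \<le> y"
  shows "eexp M (P x) \<le> eexp M (P y)"
proof (rule eexp_mono_AE)
  show "AE \<omega> in M. P x \<omega> \<le> P y \<omega>"
    using nonneg rep[of x] rep[of y]
  proof eventually_elim
    case (elim \<omega>)
    have "w (x * R \<omega> + S \<omega>) \<le> w (y * R \<omega> + S \<omega>)"
      using elim x xy by (intro mono_onD[OF wm]) (auto intro: mult_right_mono)
    then have "I \<omega> * w (x * R \<omega> + S \<omega>) \<le> I \<omega> * w (y * R \<omega> + S \<omega>)"
      using elim by (intro mult_left_mono) auto
    moreover have "x * A \<omega> \<le> y * A \<omega>" using elim xy by (intro mult_right_mono) auto
    ultimately show ?case using elim by simp
  qed
qed

section \<open>Infima and limits of concave nondecreasing functions\<close>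

lemma INF_concave_ereal:
  fixes E :: "'i \<Rightarrow> real \<Rightarrow> ereal"
  assumes conc: "\<And>i x y u v. i \<in> I \<Longrightarrow> 0 \<le> x \<Longrightarrow> 0 \<le> y \<Longrightarrow> 0 \<le> u \<Longrightarrow> 0 \<le> v \<Longrightarrow> u + v = 1
      \<Longrightarrow> ereal u * E i x + ereal v * E i y \<le> E i (u * x + v * y)"
    and fin: "\<And>x. 0 \<le> x \<Longrightarrow> \<bar>(INF i\<in>I. E i x)\<bar> \<noteq> \<infinity>"
  shows "concave_on {0..} (\<lambda>x. real_of_ereal (INF i\<in>I. E i x))"
  unfolding concave_on_iff
proof (intro conjI ballI allI impI)
  show "convex {0::real..}" by (rule convex_real_interval)
  fix x y u v :: real
  assume x: "x \<in> {0..}" and y: "y \<in> {0..}" and u: "0 \<le> u" and v: "0 \<le> v" and uv: "u + v = 1"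
  have z: "0 \<le> u * x + v * y" using x y u v by simp
  have "ereal u * (INF i\<in>I. E i x) + ereal v * (INF i\<in>I. E i y) \<le> (INF i\<in>I. E i (u * x + v * y))"
  proof (rule INF_greatest)
    fix i assume i: "i \<in> I"
    have "ereal u * (INF i\<in>I. E i x) + ereal v * (INF i\<in>I. E i y) \<le> ereal u * E i x + ereal v * E i y"
      using u v i by (intro add_mono ereal_mult_left_mono INF_lower) auto
    also have "\<dots> \<le> E i (u * x + v * y)" using conc[OF i _ _ u v uv] x y by auto
    finally show "ereal u * (INF i\<in>I. E i x) + ereal v * (INF i\<in>I. E i y) \<le> E i (u * x + v * y)" .
  qed
  moreover obtain a where "(INF i\<in>I. E i x) = ereal a"
    using fin[of x] x by (cases "(INF i\<in>I. E i x)") auto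
  moreover obtain b where "(INF i\<in>I. E i y) = ereal b"
    using fin[of y] y by (cases "(INF i\<in>I. E i y)") auto
  moreover obtain d where "(INF i\<in>I. E i (u * x + v * y)) = ereal d"
    using fin[OF z] by (cases "(INF i\<in>I. E i (u * x + v * y))") auto
  ultimately show "u * real_of_ereal (INF i\<in>I. E i x) + v * real_of_ereal (INF i\<in>I. E i y)
      \<le> real_of_ereal (INF i\<in>I. E i (u *\<^sub>R x + v *\<^sub>R y))"
    by simp
qed

lemma INF_mono_ereal:
  fixes E :: "'i \<Rightarrow> real \<Rightarrow> ereal"
  assumes mono: "\<And>i x y. i \<in> I \<Longrightarrow> 0 \<le> x \<Longrightarrow> x \<le> y \<Longrightarrow> E i x \<le> E i y"
    and fin: "\<And>x. 0 \<le> x \<Longrightarrow> \<bar>(INF i\<in>I. E i x)\<bar> \<noteq> \<infinity>"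
  shows "mono_on {0..} (\<lambda>x. real_of_ereal (INF i\<in>I. E i x))"
proof (rule mono_onI)
  fix x y :: real assume x: "x \<in> {0..}" and xy: "x \<le> y"
  have "(INF i\<in>I. E i x) \<le> (INF i\<in>I. E i y)"
    using mono x xy by (intro INF_mono) (auto intro: bexI)
  moreover obtain a where "(INF i\<in>I. E i x) = ereal a"
    using fin[of x] x by (cases "(INF i\<in>I. E i x)") auto
  moreover obtain b where "(INF i\<in>I. E i y) = ereal b"
    using fin[of y] x xy by (cases "(INF i\<in>I. E i y)") auto
  ultimately show "real_of_ereal (INF i\<in>I. E i x) \<le> real_of_ereal (INF i\<in>I. E i y)"
    by simp
qed

definition value_shape :: "real \<Rightarrow> (real \<Rightarrow> real) \<Rightarrow> bool" where
  "value_shape c w \<longleftrightarrow> concave_on {0..} w \<and> mono_on {0..} w \<and> (\<forall>x\<ge>0. - 1 / c \<le> w x \<and> w x \<le> 0)"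

lemma value_shape_decreasing_limit:
  assumes shape: "\<And>n. value_shape c (F n)" and dec: "\<And>n x. 0 \<le> x \<Longrightarrow> F (Suc n) x \<le> F n x"
  shows "\<And>x. 0 \<le> x \<Longrightarrow> convergent (\<lambda>n. F n x)" and "value_shape c (\<lambda>x. lim (\<lambda>n. F n x))"
proof -
  define G where "G x = lim (\<lambda>n. F n x)" for x
  have lim: "(\<lambda>n. F n x) \<longlonglongrightarrow> G x" if x: "0 \<le> x" for x
  proof -
    have "decseq (\<lambda>n. F n x)" using dec[OF x] by (rule decseq_SucI)
    moreover have "\<forall>n. - 1 / c \<le> F n x" using shape x unfolding value_shape_def by blast
    ultimately obtain L where "(\<lambda>n. F n x) \<longlonglongrightarrow> L" by (rule decseq_convergent)
    then show ?thesis unfolding G_def by (simp add: limI)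
  qed
  then show "\<And>x. 0 \<le> x \<Longrightarrow> convergent (\<lambda>n. F n x)" unfolding convergent_def by blast
  have "concave_on {0..} G"
    unfolding concave_on_iff
  proof (intro conjI ballI allI impI)
    show "convex {0::real..}" by (rule convex_real_interval)
    fix x y u v :: real assume x: "x \<in> {0..}" and y: "y \<in> {0..}"
      and u: "0 \<le> u" and v: "0 \<le> v" and uv: "u + v = 1"
    have "\<forall>n. u * F n x + v * F n y \<le> F n (u * x + v * y)"
      using shape x y u v uv unfolding value_shape_def concave_on_iff by auto
    moreover have "(\<lambda>n. u * F n x + v * F n y) \<longlonglongrightarrow> u * G x + v * G y"
      using lim x y by (intro tendsto_intros) auto
    moreover have "0 \<le> u * x + v * y" using x y u v by simp
    ultimately show "u * G x + v * G y \<le> G (u *\<^sub>R x + v *\<^sub>R y)"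
      using lim by (auto intro: LIMSEQ_le)
  qed
  moreover have "mono_on {0..} G"
  proof (rule mono_onI)
    fix x y :: real assume x: "x \<in> {0..}" and xy: "x \<le> y"
    have "\<forall>n. F n x \<le> F n y"
      using shape x xy unfolding value_shape_def mono_on_def by auto
    moreover have "0 \<le> y" using x xy by simp
    ultimately show "G x \<le> G y" using lim x by (intro LIMSEQ_le[OF lim lim]) auto
  qed
  moreover have "- 1 / c \<le> G x \<and> G x \<le> 0" if x: "0 \<le> x" for x
    using shape x lim[OF x] unfolding value_shape_def
    by (auto intro: LIMSEQ_le_const LIMSEQ_le_const2)
  ultimately show "value_shape c (\<lambda>x. lim (\<lambda>n. F n x))"
    unfolding value_shape_def G_def by blast
qed

lemma floor_approx_tendsto:
  "(\<lambda>k. real_of_int \<lfloor>t * real (Suc k)\<rfloor> / real (Suc k)) \<longlonglongrightarrow> (t::real)"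
proof (rule tendsto_sandwich[where f="\<lambda>k. t - inverse (real (Suc k))" and h="\<lambda>k. t"])
  have "t - inverse n \<le> real_of_int \<lfloor>t * n\<rfloor> / n \<and> real_of_int \<lfloor>t * n\<rfloor> / n \<le> t" if n: "0 < n" for n :: real
  proof -
    have fl: "t * n - 1 \<le> real_of_int \<lfloor>t * n\<rfloor>" "real_of_int \<lfloor>t * n\<rfloor> \<le> t * n" by linarith+
    have "(t * n - 1) / n \<le> real_of_int \<lfloor>t * n\<rfloor> / n" "real_of_int \<lfloor>t * n\<rfloor> / n \<le> t * n / n"
      using n by (intro divide_right_mono fl; simp)+
    moreover have "(t * n - 1) / n = t - inverse n" "t * n / n = t" using n by (simp_all add: field_simps)
    ultimately show ?thesis by linarith
  qed
  then show "\<forall>\<^sub>F k in sequentially. t - inverse (real (Suc k)) \<le> real_of_int \<lfloor>t * real (Suc k)\<rfloor> / real (Suc k)"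
    and "\<forall>\<^sub>F k in sequentially. real_of_int \<lfloor>t * real (Suc k)\<rfloor> / real (Suc k) \<le> t"
    by (simp_all del: of_nat_Suc)
  show "(\<lambda>k. t - inverse (real (Suc k))) \<longlonglongrightarrow> t"
    using tendsto_diff[OF tendsto_const LIMSEQ_inverse_real_of_nat, of t] by simp
qed simp

text \<open>A process that is measurable at each time and has continuous paths is jointly
  measurable in (sample point, time): it is the pointwise limit of its evaluations on
  the dyadic-like grids \<open>\<lfloor>t k\<rfloor> / k\<close>.\<close>

lemma joint_measurable_continuous:
  fixes Y :: "'a \<Rightarrow> real \<Rightarrow> real"
  assumes m: "\<And>t. (\<lambda>\<omega>. Y \<omega> t) \<in> borel_measurable M"
    and cont: "\<And>\<omega>. continuous_on UNIV (Y \<omega>)"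
  shows "(\<lambda>p. Y (fst p) (snd p)) \<in> borel_measurable (M \<Otimes>\<^sub>M lborel)"
proof (rule borel_measurable_LIMSEQ_real)
  let ?u = "\<lambda>k p. Y (fst p) (real_of_int \<lfloor>snd p * real (Suc k)\<rfloor> / real (Suc k))"
  show "(\<lambda>k. ?u k p) \<longlonglongrightarrow> Y (fst p) (snd p)" for p
  proof -
    have "isCont (Y (fst p)) (snd p)" using cont continuous_on_eq_continuous_at by blast
    then show ?thesis by (rule isCont_tendsto_compose) (rule floor_approx_tendsto)
  qed
  show "?u k \<in> borel_measurable (M \<Otimes>\<^sub>M lborel)" for k
  proof -
    have grid: "(\<lambda>p. Y (fst p) (real_of_int i / real (Suc k))) \<in> borel_measurable (M \<Otimes>\<^sub>M lborel)" for i
      by (rule measurable_compose[OF measurable_fst m])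
    have "(\<lambda>p. snd p * real (Suc k)) \<in> borel_measurable (M \<Otimes>\<^sub>M lborel)" by measurable
    then have "(\<lambda>p. \<lfloor>snd p * real (Suc k)\<rfloor>) \<in> measurable (M \<Otimes>\<^sub>M lborel) (count_space UNIV)"
      using measurable_compose[OF _ measurable_real_floor] by blast
    from measurable_compose_countable'[where f="\<lambda>i p. Y (fst p) (real_of_int i / real (Suc k))"
        and g="\<lambda>p. \<lfloor>snd p * real (Suc k)\<rfloor>" and I=UNIV, OF grid this]
    show ?thesis by simp
  qed
qed

lemma continuous_on_compact_bound:
  fixes g :: "'b::topological_space \<Rightarrow> real"
  assumes "continuous_on S g" "compact S"
  obtains K where "\<And>x. x \<in> S \<Longrightarrow> \<bar>g x\<bar> \<le> K"
proof -
  have "bounded (g ` S)" by (rule compact_imp_bounded[OF compact_continuous_image[OF assms]])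
  then obtain K where "\<forall>y\<in>g ` S. norm y \<le> K" unfolding bounded_iff by blast
  then show ?thesis using that[of K] by auto
qed

lemma exponential_distributed_pos:
  assumes M: "prob_space M" and D: "distributed M lborel Y (exponential_density l)"
  shows "AE x in M. 0 < Y x"
proof -
  have "AE x in lborel. 0 < exponential_density l x \<longrightarrow> 0 < x"
    using AE_lborel_singleton[of 0] by eventually_elim (auto simp: exponential_density_def)
  then show ?thesis
    using prob_space.distributed_AE2[OF M D, of "\<lambda>x. 0 < x"] by simp
qed

lemma integral_exp_neg:
  fixes lam m :: real
  assumes lam: "0 < lam" and m: "0 \<le> m"
  shows "set_integrable lborel {0..<m} (\<lambda>t. exp (- lam * t))"
    and "(LINT t:{0..<m}|lborel. exp (- lam * t)) = (1 - exp (- lam * m)) / lam"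
proof -
  have cont: "continuous_on {0..m} (\<lambda>t. exp (- lam * t))" by (intro continuous_intros)
  have "set_integrable lborel {0..m} (\<lambda>t. exp (- lam * t))"
    by (rule borel_integrable_atLeastAtMost'[OF cont])
  moreover have "set_integrable lborel {0..<m} F = set_integrable lborel {0..m} F" for F :: "real \<Rightarrow> real"
    by (rule set_integrable_discrete_difference[where X="{m}"]) auto
  ultimately show "set_integrable lborel {0..<m} (\<lambda>t. exp (- lam * t))" by simp
  have "(LINT t:{0..m}|lborel. exp (- lam * t)) = (- exp (- lam * m) / lam) - (- exp (- lam * 0) / lam)"
    unfolding set_lebesgue_integral_def
  proof (rule integral_FTC_atLeastAtMost[OF m _ cont])
    fix x
    have "((\<lambda>t. - exp (- lam * t) / lam) has_real_derivative (- (exp (- lam * x) * (- lam)) / lam)) (at x)"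
      by (auto intro!: derivative_eq_intros)
    then show "((\<lambda>t. - exp (- lam * t) / lam) has_vector_derivative exp (- lam * x)) (at x within {0..m})"
      using lam by (auto simp: has_real_derivative_iff_has_vector_derivative[symmetric] intro: has_field_derivative_at_within)
  qed
  moreover have "(LINT t:{0..<m}|lborel. exp (- lam * t)) = (LINT t:{0..m}|lborel. exp (- lam * t))"
    by (rule set_integral_discrete_difference[where X="{m}"]) auto
  ultimately show "(LINT t:{0..<m}|lborel. exp (- lam * t)) = (1 - exp (- lam * m)) / lam"
    using lam by (simp add: field_simps)
qed

section \<open>The model along sample paths\<close>

text \<open>The argument uses only the following properties of the model: measurability, almost
  sure continuity of the paths of \<open>X\<close>, almost surely positive and strictly increasing
  arrival times, and measurability of the first mark's likelihood ratio.\<close>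

locale detection_model =
  fixes M :: "'a measure" and lam mu c lam0 lam1 :: real and f :: "'e \<Rightarrow> real"
    and X :: "real \<Rightarrow> 'a \<Rightarrow> real" and T :: "nat \<Rightarrow> 'a \<Rightarrow> real" and Z :: "nat \<Rightarrow> 'a \<Rightarrow> 'e"
  assumes M: "prob_space M" and lam: "0 < lam" and c: "0 < c" and lam0: "0 < lam0" and lam1: "0 < lam1"
    and f_nonneg: "\<And>z. 0 \<le> f z"
    and X_meas: "\<And>t. X t \<in> borel_measurable M"
    and X_cont: "AE \<omega> in M. continuous_on {0..} (\<lambda>t. X t \<omega>)"
    and T_meas: "\<And>n. T (Suc n) \<in> borel_measurable M"
    and T1_pos: "AE \<omega> in M. 0 < T 1 \<omega>"
    and T_incr: "AE \<omega> in M. \<forall>n\<ge>1. T n \<omega> < T (Suc n) \<omega>"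
    and mark_meas: "(\<lambda>\<omega>. f (Z 1 \<omega>)) \<in> borel_measurable M"
begin

abbreviation "kap \<equiv> mu\<^sup>2 / 2 + lam1 - lam0"
abbreviation "Ph \<equiv> Phi lam mu lam0 lam1 f X T Z"
abbreviation "LP \<equiv> Lproc mu lam0 lam1 f X T Z"
abbreviation "LR \<equiv> Lratio mu lam0 lam1 f X T Z"
abbreviation "pay \<equiv> payoff lam mu c lam0 lam1 f X T Z"
abbreviation "J \<equiv> Jop M lam mu c lam0 lam1 f X T Z"
abbreviation "V \<equiv> vseq M lam mu c lam0 lam1 f X T Z"
abbreviation "stopping_times \<equiv> {\<tau>. stopping_time (natfilt M X) \<tau>}"

text \<open>The factor by which the likelihood ratio jumps at the first arrival.\<close>
abbreviation "jump \<omega> \<equiv> lam1 / lam0 * f (Z 1 \<omega>)"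

lemma T1_meas[measurable]: "T 1 \<in> borel_measurable M"
  using T_meas[of 0] by simp

lemma jump_meas[measurable]: "(\<lambda>\<omega>. jump \<omega>) \<in> borel_measurable M"
  using mark_meas by measurable

lemma jump_nonneg: "0 \<le> jump \<omega>"
  using lam0 lam1 f_nonneg by simp

lemma LP_nonneg: "0 \<le> LP t \<omega>"
  unfolding Lproc_def using lam0 lam1 f_nonneg by (intro mult_nonneg_nonneg prod_nonneg) auto

lemma LR_nonneg: "0 \<le> LR s t \<omega>"
  unfolding Lratio_def using lam0 lam1 f_nonneg by (intro mult_nonneg_nonneg prod_nonneg) auto

lemma Ph_affine: "Ph \<phi> t \<omega> = \<phi> * (exp (lam * t) * LP t \<omega>) + Ph 0 t \<omega>"
  unfolding Phi_def by simp

lemma Ph0_nonneg: "0 \<le> Ph 0 t \<omega>"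
  unfolding Phi_def set_lebesgue_integral_def using lam LR_nonneg
  by (auto intro!: integral_nonneg mult_nonneg_nonneg simp: indicator_def)

lemma Ph_nonneg: "0 \<le> \<phi> \<Longrightarrow> 0 \<le> Ph \<phi> t \<omega>"
  using Ph_affine[of \<phi> t \<omega>] Ph0_nonneg[of t \<omega>] LP_nonneg[of t \<omega>] by simp

definition good_path :: "'a \<Rightarrow> bool" where
  "good_path \<omega> \<longleftrightarrow> continuous_on {0..} (\<lambda>t. X t \<omega>) \<and> 0 < T 1 \<omega> \<and> (\<forall>n\<ge>1. T n \<omega> < T (Suc n) \<omega>)"

lemma good_set_exists:
  obtains G where "G \<in> sets M" "\<forall>\<omega>\<in>G. good_path \<omega>" "AE \<omega> in M. \<omega> \<in> G"
proof -
  have "AE \<omega> in M. good_path \<omega>"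
    using X_cont T1_pos T_incr unfolding good_path_def by eventually_elim auto
  then obtain N where N: "{\<omega> \<in> space M. \<not> good_path \<omega>} \<subseteq> N" "emeasure M N = 0" "N \<in> sets M"
    by (rule AE_E)
  show ?thesis
  proof (rule that[of "space M - N"])
    show "AE \<omega> in M. \<omega> \<in> space M - N" by (rule AE_I'[of N]) (use N in auto)
  qed (use N in auto)
qed

lemma good_T1_pos: "good_path \<omega> \<Longrightarrow> 0 < T 1 \<omega>"
  unfolding good_path_def by simp

lemma good_T_strict_mono:
  assumes "good_path \<omega>" "1 \<le> m" "m < n"
  shows "T m \<omega> < T n \<omega>"
  using assms(3)
proof (induction n)
  case (Suc n)
  have step: "T n \<omega> < T (Suc n) \<omega>" if "1 \<le> n" using assms(1) that unfolding good_path_def by simp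
  show ?case
  proof (cases "m < n")
    case True
    have "T m \<omega> < T n \<omega>" by (rule Suc.IH[OF True])
    moreover have "T n \<omega> < T (Suc n) \<omega>" using True assms(2) by (intro step) linarith
    ultimately show ?thesis by linarith
  next
    case False
    then have "m = n" using Suc.prems by simp
    then show ?thesis using step assms(2) by simp
  qed
qed simp

lemma good_T1_le:
  assumes "good_path \<omega>" "1 \<le> n"
  shows "T 1 \<omega> \<le> T n \<omega>"
  using good_T_strict_mono[OF assms(1), of 1 n] assms(2) by (cases "n = 1") auto

lemma good_no_arrival_before_T1:
  assumes "good_path \<omega>" "t < T 1 \<omega>"
  shows "{n. 1 \<le> n \<and> T n \<omega> \<le> t} = {}"
proof -
  have "\<not> T n \<omega> \<le> t" if "1 \<le> n" for n
    using good_T1_le[OF assms(1) that] assms(2) by linarith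
  then show ?thesis by auto
qed

lemma good_only_T1_up_to_T1:
  assumes "good_path \<omega>" "1 \<le> n" "T n \<omega> \<le> T 1 \<omega>"
  shows "n = 1"
  using good_T_strict_mono[OF assms(1), of 1 n] assms(2,3) by (cases "n = 1") auto

lemma LP_before_T1:
  assumes "good_path \<omega>" "t < T 1 \<omega>"
  shows "LP t \<omega> = exp (mu * X t \<omega> - kap * t)"
  unfolding Lproc_def good_no_arrival_before_T1[OF assms] by simp

lemma LR_before_T1:
  assumes "good_path \<omega>" "t < T 1 \<omega>"
  shows "LR s t \<omega> = exp (mu * (X t \<omega> - X s \<omega>) - kap * (t - s))"
proof -
  have no_arrivals: "{n. 1 \<le> n \<and> s < T n \<omega> \<and> T n \<omega> \<le> t} = {}"
    using good_no_arrival_before_T1[OF assms] by blast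
  show ?thesis unfolding Lratio_def no_arrivals by simp
qed

lemma LP_at_T1:
  assumes "good_path \<omega>"
  shows "LP (T 1 \<omega>) \<omega> = exp (mu * X (T 1 \<omega>) \<omega> - kap * T 1 \<omega>) * jump \<omega>"
proof -
  have only_T1: "{n. 1 \<le> n \<and> T n \<omega> \<le> T 1 \<omega>} = {1}"
    using good_only_T1_up_to_T1[OF assms] by auto
  show ?thesis unfolding Lproc_def only_T1 by simp
qed

lemma LR_at_T1:
  assumes "good_path \<omega>" "s < T 1 \<omega>"
  shows "LR s (T 1 \<omega>) \<omega> = exp (mu * (X (T 1 \<omega>) \<omega> - X s \<omega>) - kap * (T 1 \<omega> - s)) * jump \<omega>"
proof -
  have only_T1: "{n. 1 \<le> n \<and> s < T n \<omega> \<and> T n \<omega> \<le> T 1 \<omega>} = {1}"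
    using good_only_T1_up_to_T1[OF assms(1)] assms(2) by auto
  show ?thesis unfolding Lratio_def only_T1 by simp
qed

definition window :: "('a \<Rightarrow> ennreal) \<Rightarrow> 'a \<Rightarrow> real set" where
  "window \<tau> \<omega> = {t. 0 \<le> t \<and> ennreal t < min (\<tau> \<omega>) (ennreal (T 1 \<omega>))}"

lemma window_interval:
  assumes T1: "0 < T 1 \<omega>"
  obtains m where "0 \<le> m" "window \<tau> \<omega> = {0..<m}" "ennreal (T 1 \<omega>) \<le> \<tau> \<omega> \<Longrightarrow> m = T 1 \<omega>"
proof -
  define m where "m = enn2real (min (\<tau> \<omega>) (ennreal (T 1 \<omega>)))"
  have "min (\<tau> \<omega>) (ennreal (T 1 \<omega>)) < \<top>"
    using ennreal_less_top[of "T 1 \<omega>"] by (simp add: min_less_iff_disj)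
  then have m_eq: "min (\<tau> \<omega>) (ennreal (T 1 \<omega>)) = ennreal m" "0 \<le> m" unfolding m_def by auto
  show ?thesis
  proof (rule that[OF m_eq(2)])
    show "window \<tau> \<omega> = {0..<m}" unfolding window_def m_eq(1) using m_eq(2) by (auto simp: ennreal_less_iff)
    show "m = T 1 \<omega>" if "ennreal (T 1 \<omega>) \<le> \<tau> \<omega>"
      using that T1 unfolding m_def by (simp add: min.absorb2)
  qed
qed

lemma running_cost_lower:
  assumes m: "0 \<le> m" and phi: "0 \<le> \<phi>"
  shows "- (1 / c) * (1 - exp (- lam * m)) \<le> (LINT t:{0..<m}|lborel. exp (- lam * t) * (Ph \<phi> t \<omega> - lam / c))"
proof (cases "set_integrable lborel {0..<m} (\<lambda>t. exp (- lam * t) * (Ph \<phi> t \<omega> - lam / c))")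
  case True
  have "- (1 / c) * (1 - exp (- lam * m)) = - (lam / c) * (LINT t:{0..<m}|lborel. exp (- lam * t))"
    unfolding integral_exp_neg(2)[OF lam m] using lam c by (simp add: field_simps)
  also have "\<dots> = (LINT t:{0..<m}|lborel. - (lam / c) * exp (- lam * t))"
    by (rule set_integral_mult_right[symmetric])
  also have "\<dots> \<le> (LINT t:{0..<m}|lborel. exp (- lam * t) * (Ph \<phi> t \<omega> - lam / c))"
  proof (rule set_integral_mono[OF _ True])
    show "set_integrable lborel {0..<m} (\<lambda>t. - (lam / c) * exp (- lam * t))"
      using integral_exp_neg(1)[OF lam m] by (rule set_integrable_mult_right)
    show "- (lam / c) * exp (- lam * t) \<le> exp (- lam * t) * (Ph \<phi> t \<omega> - lam / c)" for t
      using Ph_nonneg[OF phi, of t \<omega>] by (simp add: algebra_simps)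
  qed
  finally show ?thesis .
next
  case False
  then have "(LINT t:{0..<m}|lborel. exp (- lam * t) * (Ph \<phi> t \<omega> - lam / c)) = 0"
    unfolding set_integrable_def set_lebesgue_integral_def by (rule not_integrable_integral_eq)
  then show ?thesis using lam m c by (simp add: mult_le_0_iff)
qed

lemma payoff_lower:
  assumes T1: "0 < T 1 \<omega>" and phi: "0 \<le> \<phi>" and w: "\<And>x. 0 \<le> x \<Longrightarrow> - 1 / c \<le> w x"
  shows "- 1 / c \<le> pay \<tau> w \<phi> \<omega>"
proof -
  obtain m where m: "0 \<le> m" "window \<tau> \<omega> = {0..<m}" "ennreal (T 1 \<omega>) \<le> \<tau> \<omega> \<Longrightarrow> m = T 1 \<omega>"
    using window_interval[OF T1] by blast
  define e where "e = exp (- lam * m)"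
  have e: "0 \<le> e" "e \<le> 1" using lam m(1) unfolding e_def by auto
  have cost: "- (1 / c) * (1 - e) \<le> (LINT t:window \<tau> \<omega>|lborel. exp (- lam * t) * (Ph \<phi> t \<omega> - lam / c))"
    unfolding m(2) e_def by (rule running_cost_lower[OF m(1) phi])
  have pay_eq: "pay \<tau> w \<phi> \<omega> = (LINT t:window \<tau> \<omega>|lborel. exp (- lam * t) * (Ph \<phi> t \<omega> - lam / c)) +
      (if ennreal (T 1 \<omega>) \<le> \<tau> \<omega> then exp (- lam * T 1 \<omega>) * w (Ph \<phi> (T 1 \<omega>) \<omega>) else 0)"
    unfolding payoff_def window_def ..
  show ?thesis
  proof (cases "ennreal (T 1 \<omega>) \<le> \<tau> \<omega>")
    case True
    have "e * (- 1 / c) \<le> e * w (Ph \<phi> (T 1 \<omega>) \<omega>)"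
      using w[OF Ph_nonneg[OF phi]] e by (intro mult_left_mono) auto
    moreover have "- 1 / c = - (1 / c) * (1 - e) + e * (- 1 / c)" using c by (simp add: field_simps)
    moreover have "exp (- lam * T 1 \<omega>) = e" unfolding e_def m(3)[OF True] ..
    then have "pay \<tau> w \<phi> \<omega> = (LINT t:window \<tau> \<omega>|lborel. exp (- lam * t) * (Ph \<phi> t \<omega> - lam / c))
        + e * w (Ph \<phi> (T 1 \<omega>) \<omega>)"
      unfolding pay_eq using True by simp
    ultimately show ?thesis using cost by linarith
  next
    case False
    have "- 1 / c \<le> - (1 / c) * (1 - e)" using e c by (simp add: field_simps)
    then show ?thesis using cost False unfolding pay_eq by simp
  qed
qed

lemma payoff_stop_now: "0 < T 1 \<omega> \<Longrightarrow> pay (\<lambda>_. 0) w \<phi> \<omega> = 0"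
  unfolding payoff_def set_lebesgue_integral_def by (simp add: ennreal_le_iff2)

lemma payoff_mono:
  assumes w: "\<And>x. 0 \<le> x \<Longrightarrow> w1 x \<le> w2 x" and phi: "0 \<le> \<phi>"
  shows "pay \<tau> w1 \<phi> \<omega> \<le> pay \<tau> w2 \<phi> \<omega>"
  unfolding payoff_def using w[OF Ph_nonneg[OF phi]] by (auto intro!: mult_left_mono)

text \<open>Property (1): stopping immediately costs nothing.\<close>

lemma J_nonpos: "J w \<phi> \<le> 0"
proof -
  have "J w \<phi> \<le> eexp M (pay (\<lambda>_. 0) w \<phi>)"
    unfolding Jop_def by (rule INF_lower) (simp add: stopping_time_const)
  also have "\<dots> = 0"
    by (rule eexp_zero_AE) (use T1_pos in \<open>auto elim!: eventually_mono simp: payoff_stop_now\<close>)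
  finally show ?thesis .
qed

text \<open>Property (2): the lower bound \<open>-1/c\<close> is inherited from the terminal reward.\<close>

lemma J_lower:
  assumes w: "\<And>x. 0 \<le> x \<Longrightarrow> - 1 / c \<le> w x" and phi: "0 \<le> \<phi>"
  shows "- ereal (1 / c) \<le> J w \<phi>"
  unfolding Jop_def
proof (rule INF_greatest)
  fix \<tau>
  have "AE \<omega> in M. - (1 / c) \<le> pay \<tau> w \<phi> \<omega>"
    using T1_pos by eventually_elim (use payoff_lower[OF _ phi w] in auto)
  then show "- ereal (1 / c) \<le> eexp M (pay \<tau> w \<phi>)"
    using c by (intro eexp_lower_bound[OF M]) auto
qed

lemma J_finite:
  assumes "\<And>x. 0 \<le> x \<Longrightarrow> - 1 / c \<le> w x" and "0 \<le> \<phi>"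
  shows "\<bar>J w \<phi>\<bar> \<noteq> \<infinity>"
proof -
  have "- ereal (1 / c) \<le> J w \<phi>" by (rule J_lower) (use assms in auto)
  then show ?thesis using J_nonpos[of w \<phi>] by auto
qed

lemma J_mono:
  assumes "\<And>x. 0 \<le> x \<Longrightarrow> w1 x \<le> w2 x" and "0 \<le> \<phi>"
  shows "J w1 \<phi> \<le> J w2 \<phi>"
  unfolding Jop_def
  by (rule INF_mono) (auto intro!: bexI eexp_mono_AE AE_I2 payoff_mono[OF assms])

lemma natfilt_space: "space (natfilt M X t) = space M"
  unfolding natfilt_def by (rule space_measure_of) auto

lemma natfilt_sets: "sets (natfilt M X t) \<subseteq> sets M"
proof -
  let ?gen = "\<Union>s\<in>{s. 0 \<le> s \<and> ennreal s \<le> t}. {X s -` B \<inter> space M | B. B \<in> sets borel}"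
  have gen_sets: "?gen \<subseteq> sets M"
    using X_meas by (auto simp: measurable_def)
  then have "sets (natfilt M X t) = sigma_sets (space M) ?gen"
    unfolding natfilt_def using sets.sets_into_space by (intro sets_measure_of) blast
  also have "\<dots> \<subseteq> sets M" using gen_sets by (rule sets.sigma_sets_subset)
  finally show ?thesis .
qed

lemma stopping_time_measurable: "\<tau> \<in> stopping_times \<Longrightarrow> \<tau> \<in> borel_measurable M"
  by (rule measurable_stopping_time[where F="natfilt M X"]) (use natfilt_sets natfilt_space in auto)

subsection \<open>The payoff of a fixed stopping time is affine in the starting point\<close>

lemma payoff_window_form:
  "pay \<tau> w \<phi> \<omega> =
     (\<integral>t. \<phi> * (indicator (window \<tau> \<omega>) t * LP t \<omega>)
        + indicator (window \<tau> \<omega>) t * (exp (- lam * t) * (Ph 0 t \<omega> - lam / c)) \<partial>lborel)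
   + (if ennreal (T 1 \<omega>) \<le> \<tau> \<omega> then exp (- lam * T 1 \<omega>) * w (Ph \<phi> (T 1 \<omega>) \<omega>) else 0)"
proof -
  have "exp (- lam * t) * (Ph \<phi> t \<omega> - lam / c)
      = \<phi> * (exp (- lam * t) * exp (lam * t)) * LP t \<omega> + exp (- lam * t) * (Ph 0 t \<omega> - lam / c)" for t
    by (subst Ph_affine) (simp add: algebra_simps)
  moreover have "exp (- lam * t) * exp (lam * t) = 1" for t by (simp flip: exp_add)
  ultimately have "(\<lambda>t. indicator (window \<tau> \<omega>) t *\<^sub>R (exp (- lam * t) * (Ph \<phi> t \<omega> - lam / c)))
      = (\<lambda>t. \<phi> * (indicator (window \<tau> \<omega>) t * LP t \<omega>)
          + indicator (window \<tau> \<omega>) t * (exp (- lam * t) * (Ph 0 t \<omega> - lam / c)))"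
    by (simp add: fun_eq_iff indicator_def)
  then show ?thesis unfolding payoff_def set_lebesgue_integral_def window_def[symmetric] by simp
qed

lemma window_indicator_meas:
  assumes [measurable]: "\<tau> \<in> borel_measurable M"
  shows "(\<lambda>p. indicator (window \<tau> (fst p)) (snd p) :: real) \<in> borel_measurable (M \<Otimes>\<^sub>M lborel)"
proof -
  have "(\<lambda>p. indicator (window \<tau> (fst p)) (snd p) :: real) =
      (\<lambda>p. if 0 \<le> snd p \<and> ennreal (snd p) < min (\<tau> (fst p)) (ennreal (T 1 (fst p))) then 1 else 0)"
    by (auto simp: window_def indicator_def fun_eq_iff)
  also have "\<dots> \<in> borel_measurable (M \<Otimes>\<^sub>M lborel)" by measurable
  finally show ?thesis .
qed

lemma window_before_T1: "t \<in> window \<tau> \<omega> \<Longrightarrow> 0 \<le> t \<and> t < T 1 \<omega>"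
  unfolding window_def by (auto simp: ennreal_less_iff)

end

text \<open>On a measurable set \<open>G\<close> of good paths of full measure we replace the paths of \<open>X\<close> by
  everywhere continuous ones, which makes all pathwise quantities jointly measurable.\<close>

locale detection_model_good_set = detection_model +
  fixes G :: "'a set"
  assumes G_sets: "G \<in> sets M" and G_good: "\<forall>\<omega>\<in>G. good_path \<omega>" and G_AE: "AE \<omega> in M. \<omega> \<in> G"
begin

definition Xg :: "'a \<Rightarrow> real \<Rightarrow> real" where
  "Xg \<omega> t = (if \<omega> \<in> G then X (max 0 t) \<omega> else 0)"

lemma Xg_eq: "\<omega> \<in> G \<Longrightarrow> 0 \<le> t \<Longrightarrow> Xg \<omega> t = X t \<omega>"
  unfolding Xg_def by simp

lemma Xg_cont: "continuous_on UNIV (Xg \<omega>)"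
proof (cases "\<omega> \<in> G")
  case True
  then have "continuous_on {0..} (\<lambda>t. X t \<omega>)" using G_good unfolding good_path_def by auto
  then have "continuous_on UNIV (\<lambda>t. X (max 0 t) \<omega>)"
    by (rule continuous_on_compose2[where f="\<lambda>t. max 0 t"]) (auto intro!: continuous_intros)
  then show ?thesis using True unfolding Xg_def by simp
qed (simp add: Xg_def)

lemma Xg_meas[measurable]: "(\<lambda>p. Xg (fst p) (snd p)) \<in> borel_measurable (M \<Otimes>\<^sub>M lborel)"
proof (rule joint_measurable_continuous[OF _ Xg_cont])
  show "(\<lambda>\<omega>. Xg \<omega> t) \<in> borel_measurable M" for t
    unfolding Xg_def by (rule measurable_If_set) (use X_meas G_sets in auto)
qed

text \<open>Before \<open>T\<^sub>1\<close> the likelihood ratio is \<open>Lg\<close> and \<open>\<Phi>\<close> started at 0 is \<open>Bg\<close>, the integral of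
  the kernel \<open>\<lambda> exp(\<lambda> (t - s)) L\<^sub>t / L\<^sub>s\<close>.\<close>

definition Lg :: "'a \<Rightarrow> real \<Rightarrow> real" where
  "Lg \<omega> t = exp (mu * Xg \<omega> t - kap * t)"

definition kernel :: "'a \<Rightarrow> real \<Rightarrow> real \<Rightarrow> real" where
  "kernel \<omega> t s = lam * exp (lam * (t - s)) * exp (mu * (Xg \<omega> t - Xg \<omega> s) - kap * (t - s))"

definition Bg :: "'a \<Rightarrow> real \<Rightarrow> real" where
  "Bg \<omega> t = (LINT s:{0..t}|lborel. kernel \<omega> t s)"

lemma Lg_meas[measurable]: "(\<lambda>p. Lg (fst p) (snd p)) \<in> borel_measurable (M \<Otimes>\<^sub>M lborel)"
  unfolding Lg_def by measurable

lemma Lg_cont: "continuous_on UNIV (Lg \<omega>)"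
  unfolding Lg_def using Xg_cont[of \<omega>] by (intro continuous_intros) auto

lemma kernel_cont: "continuous_on UNIV (\<lambda>p. kernel \<omega> (fst p) (snd p))"
proof -
  have "continuous_on UNIV (\<lambda>p. Xg \<omega> (fst p))" "continuous_on UNIV (\<lambda>p. Xg \<omega> (snd p))"
    by (rule continuous_on_compose2[OF Xg_cont]; auto intro: continuous_intros)+
  then show ?thesis unfolding kernel_def by (intro continuous_intros)
qed

lemma kernel_cont_right: "continuous_on UNIV (kernel \<omega> t)"
proof -
  have "continuous_on UNIV (\<lambda>s. kernel \<omega> (fst (t, s)) (snd (t, s)))"
    by (rule continuous_on_compose2[OF kernel_cont]) (auto intro: continuous_intros)
  then show ?thesis by simp
qed

lemma Bg_nonneg: "0 \<le> Bg \<omega> t"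
  unfolding Bg_def set_lebesgue_integral_def
  by (rule Bochner_Integration.integral_nonneg) (use lam in \<open>auto simp: kernel_def indicator_def\<close>)

lemma Bg_meas[measurable]: "(\<lambda>p. Bg (fst p) (snd p)) \<in> borel_measurable (M \<Otimes>\<^sub>M lborel)"
proof -
  have pair_meas: "(\<lambda>q::('a \<times> real) \<times> real. (fst (fst q), snd q)) \<in> (M \<Otimes>\<^sub>M lborel) \<Otimes>\<^sub>M lborel \<rightarrow>\<^sub>M M \<Otimes>\<^sub>M lborel"
    by measurable
  have [measurable]: "(\<lambda>q::('a \<times> real) \<times> real. Xg (fst (fst q)) (snd (fst q))) \<in> borel_measurable ((M \<Otimes>\<^sub>M lborel) \<Otimes>\<^sub>M lborel)"
    using measurable_compose[OF measurable_fst Xg_meas] by simp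
  have [measurable]: "(\<lambda>q::('a \<times> real) \<times> real. Xg (fst (fst q)) (snd q)) \<in> borel_measurable ((M \<Otimes>\<^sub>M lborel) \<Otimes>\<^sub>M lborel)"
    using measurable_compose[OF pair_meas Xg_meas] by simp
  have "(\<lambda>q. indicator {0..snd (fst q)} (snd q) *\<^sub>R kernel (fst (fst q)) (snd (fst q)) (snd q) :: real)
      = (\<lambda>q. (if 0 \<le> snd q \<and> snd q \<le> snd (fst q) then 1 else 0) * (lam * exp (lam * (snd (fst q) - snd q)) *
          exp (mu * (Xg (fst (fst q)) (snd (fst q)) - Xg (fst (fst q)) (snd q)) - kap * (snd (fst q) - snd q))))"
    by (auto simp: kernel_def indicator_def fun_eq_iff)
  also have "\<dots> \<in> borel_measurable ((M \<Otimes>\<^sub>M lborel) \<Otimes>\<^sub>M lborel)" by measurable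
  finally have "(\<lambda>p. \<integral>s. indicator {0..snd p} s *\<^sub>R kernel (fst p) (snd p) s \<partial>lborel) \<in> borel_measurable (M \<Otimes>\<^sub>M lborel)"
    by (intro lborel.borel_measurable_lebesgue_integral) (simp add: case_prod_beta')
  then show ?thesis unfolding Bg_def set_lebesgue_integral_def .
qed

lemma Bg_bounded:
  obtains K where "\<And>t. 0 \<le> t \<Longrightarrow> t \<le> D \<Longrightarrow> \<bar>Bg \<omega> t\<bar> \<le> K"
proof -
  obtain Kk where Kk: "\<And>p. p \<in> {0..D} \<times> {0..D} \<Longrightarrow> \<bar>kernel \<omega> (fst p) (snd p)\<bar> \<le> Kk"
    using continuous_on_compact_bound[OF continuous_on_subset[OF kernel_cont] compact_Times]
    by (metis compact_Icc subset_UNIV)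
  have "\<bar>Bg \<omega> t\<bar> \<le> \<bar>Kk\<bar> * D" if t: "0 \<le> t" "t \<le> D" for t
  proof -
    have "norm (Bg \<omega> t) \<le> (\<integral>s. \<bar>Kk\<bar> * indicator {0..t} s \<partial>lborel)"
      unfolding Bg_def set_lebesgue_integral_def
    proof (rule Bochner_Integration.integral_norm_bound_integral)
      show "integrable lborel (\<lambda>s. indicator {0..t} s *\<^sub>R kernel \<omega> t s)"
        using borel_integrable_atLeastAtMost'[OF continuous_on_subset[OF kernel_cont_right]]
        unfolding set_integrable_def by blast
      show "integrable lborel (\<lambda>s. \<bar>Kk\<bar> * indicator {0..t} s :: real)"
        by (rule borel_integrable_atLeastAtMost) auto
      show "norm (indicator {0..t} s *\<^sub>R kernel \<omega> t s) \<le> \<bar>Kk\<bar> * indicator {0..t} s" for s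
        using Kk[of "(t, s)"] t by (auto simp: indicator_def)
    qed
    also have "\<dots> \<le> \<bar>Kk\<bar> * D" using t by (simp add: mult_left_mono)
    finally show ?thesis by simp
  qed
  then show ?thesis by (rule that)
qed

lemma LP_eq_Lg: "\<omega> \<in> G \<Longrightarrow> 0 \<le> t \<Longrightarrow> t < T 1 \<omega> \<Longrightarrow> LP t \<omega> = Lg \<omega> t"
  using LP_before_T1[of \<omega> t] G_good by (simp add: Lg_def Xg_eq)

lemma Ph0_eq_Bg:
  assumes "\<omega> \<in> G" "0 \<le> t" "t < T 1 \<omega>"
  shows "Ph 0 t \<omega> = Bg \<omega> t"
proof -
  have "Ph 0 t \<omega> = (LINT s:{0..t}|lborel. lam * exp (lam * (t - s)) * LR s t \<omega>)"
    unfolding Phi_def by simp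
  also have "\<dots> = Bg \<omega> t" unfolding Bg_def
  proof (rule set_lebesgue_integral_cong)
    show "\<forall>s. s \<in> {0..t} \<longrightarrow> lam * exp (lam * (t - s)) * LR s t \<omega> = kernel \<omega> t s"
      using assms G_good by (auto simp: LR_before_T1 kernel_def Xg_eq)
  qed simp
  finally show ?thesis .
qed

text \<open>At \<open>T\<^sub>1\<close>, \<open>\<Phi>\<close> is again affine in the starting point: \<open>\<Phi>\<^sub>T\<^sub>1 = \<phi> R + S\<close>.\<close>

definition jump_slope :: "'a \<Rightarrow> real" where
  "jump_slope \<omega> = exp (lam * T 1 \<omega>) * (Lg \<omega> (T 1 \<omega>) * jump \<omega>)"

definition jump_const :: "'a \<Rightarrow> real" where
  "jump_const \<omega> = jump \<omega> * Bg \<omega> (T 1 \<omega>)"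

lemma Ph0_at_T1:
  assumes w: "\<omega> \<in> G"
  shows "Ph 0 (T 1 \<omega>) \<omega> = jump_const \<omega>"
proof -
  define D where "D = T 1 \<omega>"
  have g: "good_path \<omega>" using w G_good by auto
  have D: "0 < D" using good_T1_pos[OF g] unfolding D_def .
  have "Ph 0 D \<omega> = (LINT s:{0..D}|lborel. lam * exp (lam * (D - s)) * LR s D \<omega>)"
    unfolding Phi_def by simp
  also have "\<dots> = (LINT s:{0..<D}|lborel. lam * exp (lam * (D - s)) * LR s D \<omega>)"
    by (rule set_integral_discrete_difference[where X="{D}"]) auto
  also have "\<dots> = (LINT s:{0..<D}|lborel. jump \<omega> * kernel \<omega> D s)"
  proof (rule set_lebesgue_integral_cong)
    show "\<forall>s. s \<in> {0..<D} \<longrightarrow> lam * exp (lam * (D - s)) * LR s D \<omega> = jump \<omega> * kernel \<omega> D s"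
      using LR_at_T1[OF g] D w unfolding D_def by (auto simp: kernel_def Xg_eq)
  qed simp
  also have "\<dots> = (LINT s:{0..D}|lborel. jump \<omega> * kernel \<omega> D s)"
    by (rule set_integral_discrete_difference[where X="{D}"]) auto
  also have "\<dots> = jump_const \<omega>"
    unfolding jump_const_def Bg_def D_def by (rule set_integral_mult_right)
  finally show ?thesis unfolding D_def .
qed

lemma Ph_at_T1: "\<omega> \<in> G \<Longrightarrow> Ph \<phi> (T 1 \<omega>) \<omega> = \<phi> * jump_slope \<omega> + jump_const \<omega>"
  using Ph_affine[of \<phi> "T 1 \<omega>" \<omega>] Ph0_at_T1[of \<omega>] LP_at_T1[of \<omega>] G_good good_T1_pos[of \<omega>]
  by (simp add: jump_slope_def Lg_def Xg_eq)

definition slope_density :: "('a \<Rightarrow> ennreal) \<Rightarrow> 'a \<Rightarrow> real \<Rightarrow> real" where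
  "slope_density \<tau> \<omega> t = indicator (window \<tau> \<omega>) t * Lg \<omega> t"

definition cost_density :: "('a \<Rightarrow> ennreal) \<Rightarrow> 'a \<Rightarrow> real \<Rightarrow> real" where
  "cost_density \<tau> \<omega> t = indicator (window \<tau> \<omega>) t * (exp (- lam * t) * (Bg \<omega> t - lam / c))"

definition run_slope :: "('a \<Rightarrow> ennreal) \<Rightarrow> 'a \<Rightarrow> real" where
  "run_slope \<tau> \<omega> = (\<integral>t. slope_density \<tau> \<omega> t \<partial>lborel)"

definition run_cost :: "('a \<Rightarrow> ennreal) \<Rightarrow> 'a \<Rightarrow> real" where
  "run_cost \<tau> \<omega> = (\<integral>t. cost_density \<tau> \<omega> t \<partial>lborel)"

definition stop_discount :: "('a \<Rightarrow> ennreal) \<Rightarrow> 'a \<Rightarrow> real" where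
  "stop_discount \<tau> \<omega> = (if ennreal (T 1 \<omega>) \<le> \<tau> \<omega> then exp (- lam * T 1 \<omega>) else 0)"

lemma densities_meas:
  assumes [measurable]: "\<tau> \<in> borel_measurable M"
  shows "(\<lambda>p. slope_density \<tau> (fst p) (snd p)) \<in> borel_measurable (M \<Otimes>\<^sub>M lborel)"
    and "(\<lambda>p. cost_density \<tau> (fst p) (snd p)) \<in> borel_measurable (M \<Otimes>\<^sub>M lborel)"
  using window_indicator_meas[OF assms, measurable]
  unfolding slope_density_def cost_density_def by measurable

lemma densities_integrable:
  assumes w: "\<omega> \<in> G" and [measurable]: "\<tau> \<in> borel_measurable M"
  shows "integrable lborel (slope_density \<tau> \<omega>)" and "integrable lborel (cost_density \<tau> \<omega>)"
proof -
  define D where "D = T 1 \<omega>"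
  have window_sub: "t \<in> window \<tau> \<omega> \<Longrightarrow> t \<in> {0..D}" for t
    using window_before_T1 unfolding D_def by fastforce
  obtain KL where KL: "\<And>t. t \<in> {0..D} \<Longrightarrow> \<bar>Lg \<omega> t\<bar> \<le> KL"
    using continuous_on_compact_bound[OF continuous_on_subset[OF Lg_cont subset_UNIV] compact_Icc] by blast
  obtain KB where KB: "\<And>t. 0 \<le> t \<Longrightarrow> t \<le> D \<Longrightarrow> \<bar>Bg \<omega> t\<bar> \<le> KB" using Bg_bounded by blast
  have \<omega>: "\<omega> \<in> space M" using w sets.sets_into_space[OF G_sets] by auto
  have bound: "integrable lborel (\<lambda>t. K * indicator {0..D} t :: real)" for K :: real
    by (rule borel_integrable_atLeastAtMost) auto
  show "integrable lborel (slope_density \<tau> \<omega>)"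
  proof (rule Bochner_Integration.integrable_bound[OF bound[of KL]])
    show "slope_density \<tau> \<omega> \<in> borel_measurable lborel"
      using measurable_Pair2[OF densities_meas(1)[OF assms(2)] \<omega>] by simp
    show "AE t in lborel. norm (slope_density \<tau> \<omega> t) \<le> norm (KL * indicator {0..D} t)"
      using KL window_sub abs_ge_self[of KL] by (intro AE_I2) (force simp: slope_density_def indicator_def)
  qed
  show "integrable lborel (cost_density \<tau> \<omega>)"
  proof (rule Bochner_Integration.integrable_bound[OF bound[of "KB + lam / c"]])
    show "cost_density \<tau> \<omega> \<in> borel_measurable lborel"
      using measurable_Pair2[OF densities_meas(2)[OF assms(2)] \<omega>] by simp
    have "\<bar>exp (- lam * t) * (Bg \<omega> t - lam / c)\<bar> \<le> KB + lam / c" if "t \<in> window \<tau> \<omega>" for t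
    proof -
      have "exp (- lam * t) \<le> 1" using window_before_T1[OF that] lam by simp
      moreover have "\<bar>Bg \<omega> t - lam / c\<bar> \<le> KB + lam / c"
      proof -
        have "\<bar>Bg \<omega> t\<bar> \<le> KB" using KB window_sub[OF that] by auto
        moreover have "0 < lam / c" using lam c by simp
        ultimately show ?thesis by linarith
      qed
      ultimately show ?thesis
        using mult_right_mono[of "exp (- lam * t)" 1 "\<bar>Bg \<omega> t - lam / c\<bar>"] by (simp add: abs_mult)
    qed
    then show "AE t in lborel. norm (cost_density \<tau> \<omega> t) \<le> norm ((KB + lam / c) * indicator {0..D} t)"
      using window_sub lam c by (intro AE_I2) (force simp: cost_density_def indicator_def)
  qed
qed

lemma payoff_affine:
  assumes w: "\<omega> \<in> G" and \<tau>: "\<tau> \<in> borel_measurable M"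
  shows "pay \<tau> v \<phi> \<omega> = \<phi> * run_slope \<tau> \<omega> + run_cost \<tau> \<omega>
      + stop_discount \<tau> \<omega> * v (\<phi> * jump_slope \<omega> + jump_const \<omega>)"
proof -
  have "indicator (window \<tau> \<omega>) t * LP t \<omega> = slope_density \<tau> \<omega> t"
    "indicator (window \<tau> \<omega>) t * (exp (- lam * t) * (Ph 0 t \<omega> - lam / c)) = cost_density \<tau> \<omega> t" for t
    using window_before_T1[of t \<tau> \<omega>] LP_eq_Lg[OF w] Ph0_eq_Bg[OF w]
    unfolding slope_density_def cost_density_def by (auto simp: indicator_def)
  then have "(\<integral>t. \<phi> * (indicator (window \<tau> \<omega>) t * LP t \<omega>)
        + indicator (window \<tau> \<omega>) t * (exp (- lam * t) * (Ph 0 t \<omega> - lam / c)) \<partial>lborel)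
      = \<phi> * run_slope \<tau> \<omega> + run_cost \<tau> \<omega>"
    unfolding run_slope_def run_cost_def using densities_integrable[OF w \<tau>] by simp
  then show ?thesis
    unfolding payoff_window_form Ph_at_T1[OF w] stop_discount_def by simp
qed

lemma coefficients_meas:
  assumes [measurable]: "\<tau> \<in> borel_measurable M"
  shows "run_slope \<tau> \<in> borel_measurable M" "run_cost \<tau> \<in> borel_measurable M"
    "stop_discount \<tau> \<in> borel_measurable M" "jump_slope \<in> borel_measurable M" "jump_const \<in> borel_measurable M"
proof -
  show "run_slope \<tau> \<in> borel_measurable M" "run_cost \<tau> \<in> borel_measurable M"
    unfolding run_slope_def run_cost_def using densities_meas[OF assms]
    by (intro lborel.borel_measurable_lebesgue_integral; simp add: case_prod_beta')+
  show "stop_discount \<tau> \<in> borel_measurable M" unfolding stop_discount_def by measurable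
  have at_T1: "(\<lambda>\<omega>. (\<omega>, T 1 \<omega>)) \<in> M \<rightarrow>\<^sub>M M \<Otimes>\<^sub>M lborel" by measurable
  have "(\<lambda>\<omega>. Lg \<omega> (T 1 \<omega>)) \<in> borel_measurable M" "(\<lambda>\<omega>. Bg \<omega> (T 1 \<omega>)) \<in> borel_measurable M"
    using measurable_compose[OF at_T1 Lg_meas] measurable_compose[OF at_T1 Bg_meas] by simp_all
  then show "jump_slope \<in> borel_measurable M" "jump_const \<in> borel_measurable M"
    unfolding jump_slope_def jump_const_def by measurable
qed

lemma coefficients_nonneg:
  "0 \<le> run_slope \<tau> \<omega>" "0 \<le> stop_discount \<tau> \<omega>" "0 \<le> jump_slope \<omega>" "0 \<le> jump_const \<omega>"
proof -
  show "0 \<le> run_slope \<tau> \<omega>" unfolding run_slope_def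
    by (rule Bochner_Integration.integral_nonneg) (simp add: slope_density_def Lg_def)
  show "0 \<le> stop_discount \<tau> \<omega>" unfolding stop_discount_def by simp
  show "0 \<le> jump_slope \<omega>" unfolding jump_slope_def Lg_def
    by (intro mult_nonneg_nonneg jump_nonneg) simp_all
  show "0 \<le> jump_const \<omega>" unfolding jump_const_def by (intro mult_nonneg_nonneg jump_nonneg Bg_nonneg)
qed

end

context detection_model
begin

lemma payoff_expectation_shape:
  assumes \<tau>: "\<tau> \<in> borel_measurable M"
    and wm: "mono_on {0..} w" and wc: "concave_on {0..} w" and wb: "\<And>x. 0 \<le> x \<Longrightarrow> - 1 / c \<le> w x"
  shows "\<And>x y u v. 0 \<le> x \<Longrightarrow> 0 \<le> y \<Longrightarrow> 0 \<le> u \<Longrightarrow> 0 \<le> v \<Longrightarrow> u + v = 1 \<Longrightarrow>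
      ereal u * eexp M (pay \<tau> w x) + ereal v * eexp M (pay \<tau> w y) \<le> eexp M (pay \<tau> w (u * x + v * y))"
    and "\<And>x y. 0 \<le> x \<Longrightarrow> x \<le> y \<Longrightarrow> eexp M (pay \<tau> w x) \<le> eexp M (pay \<tau> w y)"
proof -
  obtain G where G: "G \<in> sets M" "\<forall>\<omega>\<in>G. good_path \<omega>" "AE \<omega> in M. \<omega> \<in> G"
    by (rule good_set_exists)
  interpret detection_model_good_set M lam mu c lam0 lam1 f X T Z G
    by unfold_locales (use G in auto)
  have rep: "AE \<omega> in M. pay \<tau> w \<phi> \<omega> = \<phi> * run_slope \<tau> \<omega> + run_cost \<tau> \<omega>
      + stop_discount \<tau> \<omega> * w (\<phi> * jump_slope \<omega> + jump_const \<omega>)" for \<phi>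
    using G(3) by eventually_elim (rule payoff_affine[OF _ \<tau>])
  have lb: "AE \<omega> in M. - (1 / c) \<le> pay \<tau> w \<phi> \<omega>" if "0 \<le> \<phi>" for \<phi>
    using T1_pos by eventually_elim (use payoff_lower[OF _ that wb] in auto)
  have nonneg: "AE \<omega> in M. 0 \<le> run_slope \<tau> \<omega> \<and> 0 \<le> stop_discount \<tau> \<omega> \<and> 0 \<le> jump_slope \<omega> \<and> 0 \<le> jump_const \<omega>"
    and nonneg': "AE \<omega> in M. 0 \<le> stop_discount \<tau> \<omega> \<and> 0 \<le> jump_slope \<omega> \<and> 0 \<le> jump_const \<omega>"
    using coefficients_nonneg by simp_all
  show "ereal u * eexp M (pay \<tau> w x) + ereal v * eexp M (pay \<tau> w y) \<le> eexp M (pay \<tau> w (u * x + v * y))"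
    if "0 \<le> x" "0 \<le> y" "0 \<le> u" "0 \<le> v" "u + v = 1" for x y u v
    by (rule eexp_affine_family_concave[OF M _ coefficients_meas[OF \<tau>] nonneg' wm wc rep lb])
       (use c that in auto)
  show "eexp M (pay \<tau> w x) \<le> eexp M (pay \<tau> w y)" if "0 \<le> x" "x \<le> y" for x y
    by (rule eexp_affine_family_mono[OF nonneg wm rep that])
qed

lemma J_value_shape:
  assumes w: "value_shape c w"
  shows "value_shape c (\<lambda>x. real_of_ereal (J w x))"
proof -
  have wm: "mono_on {0..} w" and wc: "concave_on {0..} w" and wb: "\<And>x. 0 \<le> x \<Longrightarrow> - 1 / c \<le> w x"
    using w unfolding value_shape_def by auto
  have fin: "\<bar>J w x\<bar> \<noteq> \<infinity>" if "0 \<le> x" for x by (rule J_finite[of w, OF wb that])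
  note shape = payoff_expectation_shape[OF stopping_time_measurable wm wc wb]
  have "concave_on {0..} (\<lambda>x. real_of_ereal (J w x))"
    unfolding Jop_def by (rule INF_concave_ereal) (use shape(1) fin in \<open>auto simp: Jop_def\<close>)
  moreover have "mono_on {0..} (\<lambda>x. real_of_ereal (J w x))"
    unfolding Jop_def by (rule INF_mono_ereal) (use shape(2) fin in \<open>auto simp: Jop_def\<close>)
  moreover have "- 1 / c \<le> real_of_ereal (J w x) \<and> real_of_ereal (J w x) \<le> 0" if "0 \<le> x" for x
    using J_nonpos[of w x] J_lower[of w, OF wb that] fin[OF that] by (cases "J w x") auto
  ultimately show ?thesis unfolding value_shape_def by blast
qed

lemma vseq_value_shape:
  shows "value_shape c (\<lambda>\<phi>. real_of_ereal (V n \<phi>))" and "0 \<le> \<phi> \<Longrightarrow> V n \<phi> = ereal (real_of_ereal (V n \<phi>))"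
proof -
  have "value_shape c (\<lambda>\<phi>. real_of_ereal (V n \<phi>)) \<and> (\<forall>\<phi>\<ge>0. \<bar>V n \<phi>\<bar> \<noteq> \<infinity>)"
  proof (induction n)
    case 0
    show ?case using c by (simp add: value_shape_def concave_on_const mono_on_def)
  next
    case (Suc n)
    have wb: "- 1 / c \<le> real_of_ereal (V n x)" if "0 \<le> x" for x
      using Suc that unfolding value_shape_def by blast
    show ?case
      using J_value_shape[of "\<lambda>\<phi>. real_of_ereal (V n \<phi>)"]
        J_finite[of "\<lambda>\<phi>. real_of_ereal (V n \<phi>)", OF wb] Suc by simp
  qed
  then show "value_shape c (\<lambda>\<phi>. real_of_ereal (V n \<phi>))" and "0 \<le> \<phi> \<Longrightarrow> V n \<phi> = ereal (real_of_ereal (V n \<phi>))"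
    by (auto intro: ereal_real'[symmetric])
qed

text \<open>\<open>v\<^sub>1 \<le> v\<^sub>0 = 0\<close> by property (1), and monotonicity of \<open>J\<close> propagates the inequality.\<close>

lemma vseq_decreasing: "0 \<le> \<phi> \<Longrightarrow> V (Suc n) \<phi> \<le> V n \<phi>"
proof (induction n arbitrary: \<phi>)
  case 0
  then show ?case using J_nonpos by simp
next
  case (Suc n)
  have "real_of_ereal (V (Suc n) x) \<le> real_of_ereal (V n x)" if "0 \<le> x" for x
    using Suc.IH[OF that] vseq_value_shape(2)[OF that, of n] vseq_value_shape(2)[OF that, of "Suc n"]
    by (metis ereal_less_eq(3))
  then show ?case using J_mono[OF _ Suc.prems] by simp
qed

end

lemma detection_model_instance:
  assumes lam: "0 < lam" and c: "0 < c" and lam0: "0 < lam0" and lam1: "0 < lam1" and M: "prob_space M"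
    and f_meas: "f \<in> borel_measurable nu0" and f_nonneg: "\<And>z. 0 \<le> f z"
    and X: "wiener_process M X" and T: "poisson_arrivals M lam0 T" and Z: "iid_marks M nu0 Z"
  shows "detection_model M lam c lam0 lam1 f X T Z"
proof -
  have X_meas: "\<And>t. X t \<in> borel_measurable M" and X_cont: "AE \<omega> in M. continuous_on {0..} (\<lambda>t. X t \<omega>)"
    using X unfolding wiener_process_def by auto
  have T_meas: "\<And>n. T (Suc n) \<in> borel_measurable M"
    and T_exp: "\<And>n. distributed M lborel (interarrival T n) (exponential_density lam0)"
    using T unfolding poisson_arrivals_def by auto
  note pos = exponential_distributed_pos[OF M T_exp]
  have T1_pos: "AE \<omega> in M. 0 < T 1 \<omega>" using pos[of 0] by (simp add: interarrival_def)
  have "AE \<omega> in M. \<forall>n. 1 \<le> n \<longrightarrow> T n \<omega> < T (Suc n) \<omega>"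
  proof (subst AE_all_countable, intro allI)
    show "AE \<omega> in M. 1 \<le> n \<longrightarrow> T n \<omega> < T (Suc n) \<omega>" for n
      using pos[of n] by eventually_elim (auto simp: interarrival_def)
  qed
  then have T_incr: "AE \<omega> in M. \<forall>n\<ge>1. T n \<omega> < T (Suc n) \<omega>" by simp
  have "Z (Suc 0) \<in> M \<rightarrow>\<^sub>M nu0" using Z unfolding iid_marks_def by auto
  from measurable_compose[OF this f_meas] have mark_meas: "(\<lambda>\<omega>. f (Z 1 \<omega>)) \<in> borel_measurable M" by simp
  show ?thesis
    by (rule detection_model.intro[of M lam c lam0 lam1 f X T Z, OF M lam c lam0 lam1 f_nonneg X_meas X_cont T_meas T1_pos T_incr mark_meas])
qed

theorem mainTheorem4:
  fixes M :: "'a measure" and nu0 nu1 :: "'e measure"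
    and lam lam0 lam1 mu c :: real
    and f :: "'e \<Rightarrow> real"
    and X :: "real \<Rightarrow> 'a \<Rightarrow> real" and T :: "nat \<Rightarrow> 'a \<Rightarrow> real" and Z :: "nat \<Rightarrow> 'a \<Rightarrow> 'e"
  assumes lam: "0 < lam" and lam0: "0 < lam0" and lam1: "0 < lam1"
    and mu: "mu \<noteq> 0" and c: "0 < c"
    and M: "prob_space M"
    and nu0: "prob_space nu0" and nu1: "prob_space nu1"
    and sets_nu1: "sets nu1 = sets nu0"
    and ac: "absolutely_continuous nu0 nu1"
    and f_meas: "f \<in> borel_measurable nu0" and f_nonneg: "\<And>z. 0 \<le> f z"
    and f_dens: "density nu0 (\<lambda>z. ennreal (f z)) = nu1"
    and X: "wiener_process M X"
    and T: "poisson_arrivals M lam0 T"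
    and Z: "iid_marks M nu0 Z"
    and indep_TZ: "indep_rv_pair M
        (Pi\<^sub>M UNIV (\<lambda>_. borel)) (\<lambda>\<omega> n. T (Suc n) \<omega>)
        (Pi\<^sub>M UNIV (\<lambda>_. nu0)) (\<lambda>\<omega> n. Z (Suc n) \<omega>)"
    and indep_X: "indep_rv_pair M
        (Pi\<^sub>M UNIV (\<lambda>_. borel)) (\<lambda>\<omega> t. X t \<omega>)
        (Pi\<^sub>M UNIV (\<lambda>_. borel) \<Otimes>\<^sub>M Pi\<^sub>M UNIV (\<lambda>_. nu0))
        (\<lambda>\<omega>. (\<lambda>n. T (Suc n) \<omega>, \<lambda>n. Z (Suc n) \<omega>))"
  defines "v \<equiv> (\<lambda>n phi. real_of_ereal (vseq M lam mu c lam0 lam1 f X T Z n phi))"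
    and "vinf \<equiv> (\<lambda>phi. lim (\<lambda>n. real_of_ereal (vseq M lam mu c lam0 lam1 f X T Z n phi)))"
  shows "(\<forall>n phi. 0 \<le> phi \<longrightarrow>
            vseq M lam mu c lam0 lam1 f X T Z (Suc n) phi \<le> vseq M lam mu c lam0 lam1 f X T Z n phi)
       \<and> (\<forall>phi. 0 \<le> phi \<longrightarrow> convergent (\<lambda>n. v n phi))
       \<and> (\<forall>n phi. 0 \<le> phi \<longrightarrow>
            - 1 / c \<le> vseq M lam mu c lam0 lam1 f X T Z n phi \<and> vseq M lam mu c lam0 lam1 f X T Z n phi \<le> 0)
       \<and> (\<forall>n. concave_on {0..} (v n) \<and> mono_on {0..} (v n))
       \<and> concave_on {0..} vinf \<and> mono_on {0..} vinf
       \<and> (\<forall>phi. 0 \<le> phi \<longrightarrow> - 1 / c \<le> vinf phi \<and> vinf phi \<le> 0)"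
proof -
  interpret detection_model M lam mu c lam0 lam1 f X T Z
    by (rule detection_model_instance[OF lam c lam0 lam1 M f_meas f_nonneg X T Z])
  have shape: "value_shape c (v n)" for n unfolding v_def by (rule vseq_value_shape(1))
  have finite: "V n \<phi> = ereal (v n \<phi>)" if "0 \<le> \<phi>" for n \<phi>
    unfolding v_def by (rule vseq_value_shape(2)[OF that])
  have decreasing: "v (Suc n) \<phi> \<le> v n \<phi>" if "0 \<le> \<phi>" for n \<phi>
    using vseq_decreasing[OF that, of n] unfolding finite[OF that] by simp
  note limit = value_shape_decreasing_limit[of c v, OF shape decreasing]
  have vinf_eq: "vinf = (\<lambda>\<phi>. lim (\<lambda>n. v n \<phi>))" unfolding vinf_def v_def ..
  have "- 1 / ereal c = ereal (- 1 / c)" using c by (simp add: one_ereal_def)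
  then show ?thesis
    using vseq_decreasing limit shape finite unfolding vinf_eq value_shape_def by auto
qed

end
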